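(* There is a universal constant $C>0$ such that for all $q>2$, integers $n,p\ge1$, and $\sigma,B>0$ with $(B^2/\sigma^2)^{q/(q-2)}\,(\ln(2p)/n)>e$, \[ \mathcal{E}_q(\sigma,B)\le C\,B\Big(\frac{\ln(2p)}n\Big)^{1-1/q}\Big[\ln\Big(\frac{B^2}{\sigma^2}\Big(\frac{\ln(2p)}n\Big)^{1-2/q}\Big)\Big]^{1/q-1}. \]
   Context: For independent mean-zero random vectors $\boldsymbol{X}_1,\dots,\boldsymbol{X}_n$ in $\mathbb{R}^p$ with joint law $P^n$, set $\mathcal{V}(P^n)=\max_{1\le j\le p}\frac1n\sum_{i=1}^n\mathbb{E}[X_i(j)^2]$ and $\mathcal{D}_q(P^n)=(\frac1n\sum_{i=1}^n\mathbb{E}[\max_{1\le j\le p}|X_i(j)|^q])^{1/q}$. $\mathcal{E}_q(\sigma,B)$ is the supremum of $\mathbb{E}[\max_{1\le j\le p}|\frac1n\sum_{i=1}^nX_i(j)|]$ over all such laws with $\mathcal{V}(P^n)\le\sigma^2$ and $\mathcal{D}_q(P^n)\le B$. The constant $C$ does not depend on $n,p,q,\sigma,B$. *)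

theory Defs
  imports "HOL-Probability.Probability"
begin

text \<open>The joint law P^n of the random vectors X_1,...,X_n in R^p is represented canonically
  as a probability measure M on the sample space nat => nat => real, where the
  coordinate omega i j plays the role of X_(i+1)(j+1) (i < n, j < p).  Indices are 0-based.\<close>

definition admissible_law :: "nat \<Rightarrow> nat \<Rightarrow> (nat \<Rightarrow> nat \<Rightarrow> real) measure \<Rightarrow> bool" where
  "admissible_law n p M \<longleftrightarrow>
     prob_space M \<and>
     (\<forall>i<n. \<forall>j<p. (\<lambda>\<omega>. \<omega> i j) \<in> borel_measurable M \<and>
                    integrable M (\<lambda>\<omega>. \<omega> i j) \<and> (\<integral>\<omega>. \<omega> i j \<partial>M) = 0) \<and>
     prob_space.indep_vars M (\<lambda>_. PiM {..<p} (\<lambda>_. borel))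
        (\<lambda>i \<omega>. restrict (\<omega> i) {..<p}) {..<n}"

definition law_V :: "nat \<Rightarrow> nat \<Rightarrow> (nat \<Rightarrow> nat \<Rightarrow> real) measure \<Rightarrow> ennreal" where
  "law_V n p M = (MAX j\<in>{..<p}. (\<Sum>i<n. \<integral>\<^sup>+\<omega>. ennreal ((\<omega> i j)\<^sup>2) \<partial>M) / of_nat n)"

definition law_Dq_pow :: "real \<Rightarrow> nat \<Rightarrow> nat \<Rightarrow> (nat \<Rightarrow> nat \<Rightarrow> real) measure \<Rightarrow> ennreal" where
  "law_Dq_pow q n p M =
     (\<Sum>i<n. \<integral>\<^sup>+\<omega>. ennreal ((MAX j\<in>{..<p}. \<bar>\<omega> i j\<bar>) powr q) \<partial>M) / of_nat n"

definition Dq_le :: "real \<Rightarrow> nat \<Rightarrow> nat \<Rightarrow> (nat \<Rightarrow> nat \<Rightarrow> real) measure \<Rightarrow> real \<Rightarrow> bool" where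
  "Dq_le q n p M B \<longleftrightarrow> law_Dq_pow q n p M < \<infinity> \<and> enn2real (law_Dq_pow q n p M) powr (1 / q) \<le> B"

definition max_mean_dev :: "nat \<Rightarrow> nat \<Rightarrow> (nat \<Rightarrow> nat \<Rightarrow> real) measure \<Rightarrow> ennreal" where
  "max_mean_dev n p M = (\<integral>\<^sup>+\<omega>. ennreal (MAX j\<in>{..<p}. \<bar>(\<Sum>i<n. \<omega> i j) / real n\<bar>) \<partial>M)"

definition Eq :: "real \<Rightarrow> nat \<Rightarrow> nat \<Rightarrow> real \<Rightarrow> real \<Rightarrow> ennreal" where
  "Eq q n p \<sigma> B = (SUP M \<in> {M. admissible_law n p M \<and> law_V n p M \<le> ennreal (\<sigma>\<^sup>2) \<and> Dq_le q n p M B}.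
                      max_mean_dev n p M)"

end

(* Truncate every observation X_i at level tau of its sup-norm max_j |X_i(j)| and recentre.  The
   recentred truncated entries are independent across i, bounded by 2 tau and have second moments at
   most those of X_i(j); a second-order bound on their moment generating functions together with the
   soft-max inequality gives E max_j |sum_i Y_i(j)| <= ln(2p)/lam + lam e^(2 lam tau) n sigma^2/2.
   The truncation error of row i is at most (max_j |X_i(j)|^q + E max_j |X_i(j)|^q) / tau^(q-1), which
   costs 2 B^q / tau^(q-1) after averaging.  With L = ln(2p)/n, m = max(1, ln(B^2 L^(1-2/q) / sigma^2)),
   tau = B (m/L)^(1/q) and lam = m/(4 tau) the three terms add up to at most 12 B L^(1-1/q) m^(1/q-1);
   the hypothesis of the theorem makes the logarithm positive. *)
theory Submission
  imports Defs
begin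

lemma le_powr_div_powr:
  fixes t x q :: real
  assumes "0 < t" "t < x" "1 \<le> q"
  shows "x \<le> x powr q / t powr (q - 1)"
proof -
  have "t powr (q - 1) \<le> x powr (q - 1)" using assms by (intro powr_mono2) auto
  hence "x * t powr (q - 1) \<le> x * x powr (q - 1)" using assms by (intro mult_left_mono) auto
  also have "x * x powr (q - 1) = x powr q" using assms by (simp add: powr_diff)
  finally show ?thesis using assms by (simp add: field_simps)
qed

lemma exp_le_quadratic:
  fixes y b :: real
  assumes "\<bar>y\<bar> \<le> b"
  shows "exp y \<le> 1 + y + y\<^sup>2 * exp b / 2"
proof -
  obtain t where t: "\<bar>t\<bar> \<le> \<bar>y\<bar>" "exp y = (\<Sum>m<2. y ^ m / fact m) + exp t / fact 2 * y ^ 2"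
    using Maclaurin_exp_le[of y 2] by blast
  have "exp t \<le> exp b" using t(1) assms by simp
  hence "exp t / fact 2 * y ^ 2 \<le> exp b / 2 * y\<^sup>2"
    by (intro mult_right_mono) (auto simp: fact_numeral)
  thus ?thesis using t(2) by (simp add: numeral_2_eq_2 algebra_simps)
qed

text \<open>Soft-max bound in which the logarithm of the exponential sum \<open>W\<close> is linearised via
  \<open>ln W \<le> W / c + ln c - 1\<close>, so that expectations can be taken on the right.\<close>

lemma Max_abs_le_log_sum_exp:
  fixes s :: "'a \<Rightarrow> real"
  assumes "finite J" "J \<noteq> {}" "0 < lam" "0 < c"
  shows "(MAX j\<in>J. \<bar>s j\<bar>) \<le> ((\<Sum>j\<in>J. exp (lam * s j) + exp (- (lam * s j))) / c + ln c - 1) / lam"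
proof -
  define W where "W = (\<Sum>j\<in>J. exp (lam * s j) + exp (- (lam * s j)))"
  have exp_le_W: "exp (lam * \<bar>s j\<bar>) \<le> W" if "j \<in> J" for j
  proof -
    have "exp (lam * \<bar>s j\<bar>) \<le> exp (lam * s j) + exp (- (lam * s j))"
      by (cases "s j \<ge> 0") (auto simp: add_increasing add_increasing2)
    also have "\<dots> \<le> W" unfolding W_def using assms that
      by (intro member_le_sum) (auto intro: add_nonneg_nonneg)
    finally show ?thesis .
  qed
  hence sj: "lam * \<bar>s j\<bar> \<le> ln W" if "j \<in> J" for j
    using that by (metis exp_gt_zero ln_exp ln_le_cancel_iff order_less_le_trans)
  have W0: "0 < W"
    using exp_le_W assms(2) by (metis all_not_in_conv exp_gt_zero order_less_le_trans)
  have "ln W \<le> W / c + ln c - 1"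
    using ln_le_minus_one[of "W / c"] W0 assms(2,4) by (auto simp: ln_div)
  hence "\<bar>s j\<bar> \<le> (W / c + ln c - 1) / lam" if "j \<in> J" for j
    using sj[OF that] assms(3) by (simp add: field_simps)
  thus ?thesis using assms(1,2) by (simp add: W_def)
qed

lemma one_less_mul_powr_of_powr_mul_gt_exp1:
  fixes x L q :: real
  assumes "0 < x" "0 < L" "2 < q" "exp 1 < x powr (q / (q - 2)) * L"
  shows "1 < x * L powr (1 - 2 / q)"
proof -
  have "x * L powr (1 - 2 / q) = (x powr (q / (q - 2)) * L) powr ((q - 2) / q)"
    using assms by (simp add: powr_mult powr_powr field_simps)
  moreover have "1 < x powr (q / (q - 2)) * L" using assms(4) by (meson less_trans one_less_exp_iff zero_less_one)
  ultimately show ?thesis using assms(3) by (simp add: gr_one_powr)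
qed

lemma sq_mul_exp_half_le:
  fixes m :: real
  assumes "0 \<le> m"
  shows "m\<^sup>2 * exp (m / 2) \<le> 48 * exp (m - 1)"
proof -
  have "m / 4 \<le> exp (m / 4)" using exp_ge_add_one_self[of "m / 4"] by linarith
  hence "(m / 4)\<^sup>2 \<le> (exp (m / 4))\<^sup>2" using assms by (intro power_mono) auto
  hence "m\<^sup>2 \<le> 16 * exp (m / 2)" by (simp add: power_divide power2_eq_square flip: exp_add)
  hence "m\<^sup>2 * exp (m / 2) \<le> 16 * exp (m / 2) * exp (m / 2)" by (simp add: mult_right_mono)
  also have "\<dots> = 16 * exp 1 * exp (m - 1)" by (simp flip: exp_add)
  also have "\<dots> \<le> 48 * exp (m - 1)" using exp_le by simp
  finally show ?thesis .
qed

lemma (in prob_space) mgf_bounded_centered_le: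
  fixes Y :: "'a \<Rightarrow> real"
  assumes [measurable]: "Y \<in> borel_measurable M"
    and bounded: "\<And>\<omega>. \<bar>Y \<omega>\<bar> \<le> a" and centered: "expectation Y = 0"
  shows "integrable M (\<lambda>\<omega>. exp (t * Y \<omega>))"
    and "expectation (\<lambda>\<omega>. exp (t * Y \<omega>)) \<le> exp (t\<^sup>2 * exp (\<bar>t\<bar> * a) / 2 * expectation (\<lambda>\<omega>. (Y \<omega>)\<^sup>2))"
proof -
  have tY: "\<bar>t * Y \<omega>\<bar> \<le> \<bar>t\<bar> * a" for \<omega>
    using bounded by (simp add: abs_mult mult_left_mono)
  have iY: "integrable M Y" using bounded by (intro integrable_const_bound[where B=a]) auto
  have "(Y \<omega>)\<^sup>2 \<le> a\<^sup>2" for \<omega>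
    using bounded[of \<omega>] by (metis abs_ge_zero power2_abs power_mono)
  hence iY2: "integrable M (\<lambda>\<omega>. (Y \<omega>)\<^sup>2)"
    by (intro integrable_const_bound[where B="a\<^sup>2"]) auto
  show ie: "integrable M (\<lambda>\<omega>. exp (t * Y \<omega>))"
    using tY by (intro integrable_const_bound[where B="exp (\<bar>t\<bar> * a)"]) (auto simp: abs_le_iff)
  have "expectation (\<lambda>\<omega>. exp (t * Y \<omega>))
      \<le> expectation (\<lambda>\<omega>. 1 + t * Y \<omega> + t\<^sup>2 * exp (\<bar>t\<bar> * a) / 2 * (Y \<omega>)\<^sup>2)"
    using ie iY iY2 exp_le_quadratic[OF tY]
    by (intro integral_mono) (auto simp: algebra_simps)
  also have "\<dots> = 1 + t\<^sup>2 * exp (\<bar>t\<bar> * a) / 2 * expectation (\<lambda>\<omega>. (Y \<omega>)\<^sup>2)"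
    using iY iY2 centered prob_space by simp
  also have "\<dots> \<le> exp (t\<^sup>2 * exp (\<bar>t\<bar> * a) / 2 * expectation (\<lambda>\<omega>. (Y \<omega>)\<^sup>2))"
    by (rule exp_ge_add_one_self)
  finally show "expectation (\<lambda>\<omega>. exp (t * Y \<omega>)) \<le> \<dots>" .
qed

lemma (in prob_space) mgf_indep_sum_le:
  fixes Y :: "'i \<Rightarrow> 'a \<Rightarrow> real"
  assumes I: "finite I" and indep: "indep_vars (\<lambda>_. borel) Y I"
    and bounded: "\<And>i \<omega>. i \<in> I \<Longrightarrow> \<bar>Y i \<omega>\<bar> \<le> a"
    and centered: "\<And>i. i \<in> I \<Longrightarrow> expectation (Y i) = 0"
  shows "integrable M (\<lambda>\<omega>. exp (t * (\<Sum>i\<in>I. Y i \<omega>)))"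
    and "expectation (\<lambda>\<omega>. exp (t * (\<Sum>i\<in>I. Y i \<omega>)))
      \<le> exp (t\<^sup>2 * exp (\<bar>t\<bar> * a) / 2 * (\<Sum>i\<in>I. expectation (\<lambda>\<omega>. (Y i \<omega>)\<^sup>2)))"
proof -
  define c where "c = t\<^sup>2 * exp (\<bar>t\<bar> * a) / 2"
  have meas: "Y i \<in> borel_measurable M" if "i \<in> I" for i
    using indep that by (auto simp: indep_vars_def)
  have mgf_int: "integrable M (\<lambda>\<omega>. exp (t * Y i \<omega>))"
    and mgf_le: "expectation (\<lambda>\<omega>. exp (t * Y i \<omega>)) \<le> exp (c * expectation (\<lambda>\<omega>. (Y i \<omega>)\<^sup>2))"
    if "i \<in> I" for i
    using mgf_bounded_centered_le[OF meas[OF that] bounded[OF that] centered[OF that]]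
    by (auto simp: c_def)
  have indep_exp: "indep_vars (\<lambda>_. borel) (\<lambda>i \<omega>. exp (t * Y i \<omega>)) I"
    by (rule indep_vars_compose2[OF indep]) simp
  have exp_sum_eq_prod: "exp (t * (\<Sum>i\<in>I. Y i \<omega>)) = (\<Prod>i\<in>I. exp (t * Y i \<omega>))" for \<omega>
    using I by (simp add: sum_distrib_left exp_sum)
  show "integrable M (\<lambda>\<omega>. exp (t * (\<Sum>i\<in>I. Y i \<omega>)))"
    unfolding exp_sum_eq_prod using I indep_exp mgf_int by (rule indep_vars_integrable)
  have "expectation (\<lambda>\<omega>. exp (t * (\<Sum>i\<in>I. Y i \<omega>))) = (\<Prod>i\<in>I. expectation (\<lambda>\<omega>. exp (t * Y i \<omega>)))"
    unfolding exp_sum_eq_prod using I indep_exp mgf_int by (rule indep_vars_lebesgue_integral)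
  also have "\<dots> \<le> (\<Prod>i\<in>I. exp (c * expectation (\<lambda>\<omega>. (Y i \<omega>)\<^sup>2)))"
    using mgf_le by (intro prod_mono) auto
  also have "\<dots> = exp (c * (\<Sum>i\<in>I. expectation (\<lambda>\<omega>. (Y i \<omega>)\<^sup>2)))"
    using I by (simp add: exp_sum sum_distrib_left)
  finally show "expectation (\<lambda>\<omega>. exp (t * (\<Sum>i\<in>I. Y i \<omega>))) \<le> exp (c * (\<Sum>i\<in>I. expectation (\<lambda>\<omega>. (Y i \<omega>)\<^sup>2)))" .
qed

lemma (in prob_space) expectation_Max_abs_le_of_mgf:
  fixes S :: "'j \<Rightarrow> 'a \<Rightarrow> real"
  assumes J: "finite J" "J \<noteq> {}" and lam: "0 < lam"
    and meas: "\<And>j. j \<in> J \<Longrightarrow> S j \<in> borel_measurable M"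
    and mgf_int: "\<And>j s. j \<in> J \<Longrightarrow> s \<in> {lam, - lam} \<Longrightarrow> integrable M (\<lambda>\<omega>. exp (s * S j \<omega>))"
    and mgf_le: "\<And>j s. j \<in> J \<Longrightarrow> s \<in> {lam, - lam} \<Longrightarrow> expectation (\<lambda>\<omega>. exp (s * S j \<omega>)) \<le> exp K"
  shows "integrable M (\<lambda>\<omega>. MAX j\<in>J. \<bar>S j \<omega>\<bar>)"
    and "expectation (\<lambda>\<omega>. MAX j\<in>J. \<bar>S j \<omega>\<bar>) \<le> (ln (2 * card J) + K) / lam"
proof -
  define c where "c = 2 * card J * exp K"
  have c0: "0 < c" using J by (simp add: c_def card_gt_0_iff)
  define W where "W \<omega> = (\<Sum>j\<in>J. exp (lam * S j \<omega>) + exp (- (lam * S j \<omega>)))" for \<omega>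
  define F where "F \<omega> = (W \<omega> / c + ln c - 1) / lam" for \<omega>
  have W_int: "integrable M W"
    unfolding W_def using mgf_int[of _ lam] mgf_int[of _ "- lam"] by auto
  have "expectation W = (\<Sum>j\<in>J. expectation (\<lambda>\<omega>. exp (lam * S j \<omega>)) + expectation (\<lambda>\<omega>. exp (- lam * S j \<omega>)))"
    unfolding W_def using mgf_int[of _ lam] mgf_int[of _ "- lam"] by (simp add: Bochner_Integration.integral_sum)
  also have "\<dots> \<le> (\<Sum>j\<in>J. exp K + exp K)"
    using mgf_le[of _ lam] mgf_le[of _ "- lam"] by (intro sum_mono add_mono) auto
  also have "\<dots> = c" by (simp add: c_def)
  finally have W_le: "expectation W \<le> c" .
  have F_int: "integrable M F" unfolding F_def using W_int by simp
  have "expectation F = (expectation W / c + ln c - 1) / lam"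
    unfolding F_def using W_int prob_space by simp
  also have "\<dots> \<le> (ln (2 * card J) + K) / lam"
    using W_le c0 lam J by (simp add: divide_right_mono c_def ln_mult card_gt_0_iff)
  finally have F_le: "expectation F \<le> (ln (2 * card J) + K) / lam" .
  have Max_le_F: "(MAX j\<in>J. \<bar>S j \<omega>\<bar>) \<le> F \<omega>" for \<omega>
    unfolding F_def W_def using J lam c0 by (rule Max_abs_le_log_sum_exp)
  have Max_nonneg: "0 \<le> (MAX j\<in>J. \<bar>S j \<omega>\<bar>)" for \<omega>
    using J by (auto simp: Max_ge_iff)
  have Max_meas: "(\<lambda>\<omega>. MAX j\<in>J. \<bar>S j \<omega>\<bar>) \<in> borel_measurable M"
    using J meas by (intro borel_measurable_Max) auto
  show Max_int: "integrable M (\<lambda>\<omega>. MAX j\<in>J. \<bar>S j \<omega>\<bar>)"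
    using F_int Max_meas
  proof (rule Bochner_Integration.integrable_bound)
    show "AE \<omega> in M. norm (MAX j\<in>J. \<bar>S j \<omega>\<bar>) \<le> norm (F \<omega>)"
      using Max_le_F Max_nonneg by (auto intro: order_trans[OF _ abs_ge_self])
  qed
  show "expectation (\<lambda>\<omega>. MAX j\<in>J. \<bar>S j \<omega>\<bar>) \<le> (ln (2 * card J) + K) / lam"
    using integral_mono[OF Max_int F_int Max_le_F] F_le by linarith
qed

lemma (in prob_space) expectation_Max_abs_indep_sum_le:
  fixes Y :: "'i \<Rightarrow> 'j \<Rightarrow> 'a \<Rightarrow> real"
  assumes I: "finite I" and J: "finite J" "J \<noteq> {}" and lam: "0 < lam"
    and indep: "\<And>j. j \<in> J \<Longrightarrow> indep_vars (\<lambda>_. borel) (\<lambda>i. Y i j) I"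
    and bounded: "\<And>i j \<omega>. i \<in> I \<Longrightarrow> j \<in> J \<Longrightarrow> \<bar>Y i j \<omega>\<bar> \<le> a"
    and centered: "\<And>i j. i \<in> I \<Longrightarrow> j \<in> J \<Longrightarrow> expectation (Y i j) = 0"
    and variance: "\<And>j. j \<in> J \<Longrightarrow> (\<Sum>i\<in>I. expectation (\<lambda>\<omega>. (Y i j \<omega>)\<^sup>2)) \<le> V"
  shows "integrable M (\<lambda>\<omega>. MAX j\<in>J. \<bar>\<Sum>i\<in>I. Y i j \<omega>\<bar>)"
    and "expectation (\<lambda>\<omega>. MAX j\<in>J. \<bar>\<Sum>i\<in>I. Y i j \<omega>\<bar>)
      \<le> ln (2 * card J) / lam + lam * exp (lam * a) * V / 2"
proof -
  define K where "K = lam\<^sup>2 * exp (lam * a) / 2 * V"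
  have meas: "(\<lambda>\<omega>. \<Sum>i\<in>I. Y i j \<omega>) \<in> borel_measurable M" if "j \<in> J" for j
    using indep[OF that] by (intro borel_measurable_sum) (auto simp: indep_vars_def)
  have mgf_int: "integrable M (\<lambda>\<omega>. exp (s * (\<Sum>i\<in>I. Y i j \<omega>)))"
    and mgf_le: "expectation (\<lambda>\<omega>. exp (s * (\<Sum>i\<in>I. Y i j \<omega>))) \<le> exp K"
    if "j \<in> J" "s \<in> {lam, - lam}" for j s
  proof -
    note mgf = mgf_indep_sum_le[OF I indep[OF that(1)] bounded[OF _ that(1)] centered[OF _ that(1)], of s]
    show "integrable M (\<lambda>\<omega>. exp (s * (\<Sum>i\<in>I. Y i j \<omega>)))" by (rule mgf(1))
    have "s\<^sup>2 * exp (\<bar>s\<bar> * a) / 2 * (\<Sum>i\<in>I. expectation (\<lambda>\<omega>. (Y i j \<omega>)\<^sup>2)) \<le> K"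
      using that lam variance[OF that(1)] by (auto simp: K_def intro!: mult_left_mono)
    with mgf(2) show "expectation (\<lambda>\<omega>. exp (s * (\<Sum>i\<in>I. Y i j \<omega>))) \<le> exp K"
      by (meson exp_le_cancel_iff order_trans)
  qed
  note Max = expectation_Max_abs_le_of_mgf[OF J lam meas mgf_int mgf_le]
  show "integrable M (\<lambda>\<omega>. MAX j\<in>J. \<bar>\<Sum>i\<in>I. Y i j \<omega>\<bar>)" by (rule Max(1))
  have "(ln (2 * card J) + K) / lam = ln (2 * card J) / lam + lam * exp (lam * a) * V / 2"
    using lam by (simp add: K_def add_divide_distrib power2_eq_square)
  thus "expectation (\<lambda>\<omega>. MAX j\<in>J. \<bar>\<Sum>i\<in>I. Y i j \<omega>\<bar>) \<le> \<dots>" using Max(2) by simp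
qed

definition truncate_at :: "real \<Rightarrow> ('a \<Rightarrow> real) \<Rightarrow> ('a \<Rightarrow> real) \<Rightarrow> 'a \<Rightarrow> real" where
  "truncate_at \<tau> R X \<omega> = (if R \<omega> \<le> \<tau> then X \<omega> else 0)"

lemma borel_measurable_truncate_at[measurable]:
  assumes [measurable]: "R \<in> borel_measurable M" "X \<in> borel_measurable M"
  shows "truncate_at \<tau> R X \<in> borel_measurable M"
  unfolding truncate_at_def[abs_def] by measurable

lemma abs_truncate_at_le:
  "\<bar>X \<omega>\<bar> \<le> R \<omega> \<Longrightarrow> 0 \<le> \<tau> \<Longrightarrow> \<bar>truncate_at \<tau> R X \<omega>\<bar> \<le> \<tau>"
  by (simp add: truncate_at_def)

lemma truncate_at_sq_le: "(truncate_at \<tau> R X \<omega>)\<^sup>2 \<le> (X \<omega>)\<^sup>2"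
  by (simp add: truncate_at_def)

lemma abs_sub_truncate_at_le:
  assumes "\<bar>X \<omega>\<bar> \<le> R \<omega>" "0 < \<tau>" "1 \<le> q"
  shows "\<bar>X \<omega> - truncate_at \<tau> R X \<omega>\<bar> \<le> R \<omega> powr q / \<tau> powr (q - 1)"
proof (cases "R \<omega> \<le> \<tau>")
  case False
  thus ?thesis using assms le_powr_div_powr[of \<tau> "R \<omega>" q] by (simp add: truncate_at_def)
qed (simp add: truncate_at_def)

lemma (in finite_measure) integrable_truncate_at:
  assumes "R \<in> borel_measurable M" "X \<in> borel_measurable M" "\<And>\<omega>. \<bar>X \<omega>\<bar> \<le> R \<omega>" "0 \<le> \<tau>"
  shows "integrable M (truncate_at \<tau> R X)"
  using assms abs_truncate_at_le[of X _ R \<tau>] by (intro integrable_const_bound[where B=\<tau>]) auto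

context prob_space
begin

lemma abs_centered_truncate_at_le:
  assumes [measurable]: "R \<in> borel_measurable M" "X \<in> borel_measurable M"
    and "\<And>\<omega>. \<bar>X \<omega>\<bar> \<le> R \<omega>" "0 \<le> \<tau>"
  shows "\<bar>truncate_at \<tau> R X \<omega> - expectation (truncate_at \<tau> R X)\<bar> \<le> 2 * \<tau>"
proof -
  have bounded: "\<bar>truncate_at \<tau> R X \<omega>\<bar> \<le> \<tau>" for \<omega>
    using assms by (intro abs_truncate_at_le)
  have "integrable M (truncate_at \<tau> R X)" using assms by (rule integrable_truncate_at)
  have "\<bar>expectation (truncate_at \<tau> R X)\<bar> \<le> expectation (\<lambda>\<omega>. \<bar>truncate_at \<tau> R X \<omega>\<bar>)"
    using integral_norm_bound[of M "truncate_at \<tau> R X"] by simp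
  also have "\<dots> \<le> expectation (\<lambda>\<omega>. \<tau>)"
    using \<open>integrable M (truncate_at \<tau> R X)\<close> bounded by (intro integral_mono) auto
  finally show ?thesis using bounded[of \<omega>] prob_space by simp
qed

lemma expectation_sq_centered_truncate_at_le:
  assumes [measurable]: "R \<in> borel_measurable M" "X \<in> borel_measurable M"
    and X2: "integrable M (\<lambda>\<omega>. (X \<omega>)\<^sup>2)"
  shows "expectation (\<lambda>\<omega>. (truncate_at \<tau> R X \<omega> - expectation (truncate_at \<tau> R X))\<^sup>2)
    \<le> expectation (\<lambda>\<omega>. (X \<omega>)\<^sup>2)"
proof -
  have Z2: "integrable M (\<lambda>\<omega>. (truncate_at \<tau> R X \<omega>)\<^sup>2)"
  proof (rule Bochner_Integration.integrable_bound[OF X2])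
    show "(\<lambda>\<omega>. (truncate_at \<tau> R X \<omega>)\<^sup>2) \<in> borel_measurable M" by measurable
    show "AE \<omega> in M. norm ((truncate_at \<tau> R X \<omega>)\<^sup>2) \<le> norm ((X \<omega>)\<^sup>2)"
      by (simp add: truncate_at_sq_le)
  qed
  have Z: "integrable M (truncate_at \<tau> R X)"
    using Z2 by (rule square_integrable_imp_integrable[rotated]) measurable
  have "variance (truncate_at \<tau> R X) \<le> expectation (\<lambda>\<omega>. (truncate_at \<tau> R X \<omega>)\<^sup>2)"
    unfolding variance_eq[OF Z Z2] by simp
  also have "\<dots> \<le> expectation (\<lambda>\<omega>. (X \<omega>)\<^sup>2)"
    using Z2 X2 by (intro integral_mono) (simp_all add: truncate_at_sq_le)
  finally show ?thesis .
qed

lemma abs_sub_centered_truncate_at_le: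
  assumes [measurable]: "R \<in> borel_measurable M" "X \<in> borel_measurable M"
    and dominated: "\<And>\<omega>. \<bar>X \<omega>\<bar> \<le> R \<omega>" and "0 < \<tau>" "1 \<le> q"
    and X: "integrable M X" "expectation X = 0" and Rq: "integrable M (\<lambda>\<omega>. R \<omega> powr q)"
  shows "\<bar>X \<omega> - (truncate_at \<tau> R X \<omega> - expectation (truncate_at \<tau> R X))\<bar>
    \<le> (R \<omega> powr q + expectation (\<lambda>\<omega>. R \<omega> powr q)) / \<tau> powr (q - 1)"
proof -
  have error: "\<bar>X \<omega> - truncate_at \<tau> R X \<omega>\<bar> \<le> R \<omega> powr q / \<tau> powr (q - 1)" for \<omega>
    using dominated assms(4,5) by (rule abs_sub_truncate_at_le)
  have Z: "integrable M (truncate_at \<tau> R X)"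
    using dominated \<open>0 < \<tau>\<close> by (intro integrable_truncate_at) auto
  have "\<bar>expectation (truncate_at \<tau> R X)\<bar> = \<bar>expectation (\<lambda>\<omega>. X \<omega> - truncate_at \<tau> R X \<omega>)\<bar>"
    using X Z by (simp add: Bochner_Integration.integral_diff)
  also have "\<dots> \<le> expectation (\<lambda>\<omega>. \<bar>X \<omega> - truncate_at \<tau> R X \<omega>\<bar>)"
    using integral_norm_bound[of M "\<lambda>\<omega>. X \<omega> - truncate_at \<tau> R X \<omega>"] by simp
  also have "\<dots> \<le> expectation (\<lambda>\<omega>. R \<omega> powr q / \<tau> powr (q - 1))"
    using X Z Rq error by (intro integral_mono Bochner_Integration.integrable_diff) simp_all
  also have "\<dots> = expectation (\<lambda>\<omega>. R \<omega> powr q) / \<tau> powr (q - 1)" by simp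
  finally have mean: "\<bar>expectation (truncate_at \<tau> R X)\<bar> \<le> expectation (\<lambda>\<omega>. R \<omega> powr q) / \<tau> powr (q - 1)" .
  have "\<bar>X \<omega> - (truncate_at \<tau> R X \<omega> - expectation (truncate_at \<tau> R X))\<bar>
      \<le> \<bar>X \<omega> - truncate_at \<tau> R X \<omega>\<bar> + \<bar>expectation (truncate_at \<tau> R X)\<bar>"
    by (rule order_trans[OF _ abs_triangle_ineq]) simp
  also have "\<dots> \<le> R \<omega> powr q / \<tau> powr (q - 1) + expectation (\<lambda>\<omega>. R \<omega> powr q) / \<tau> powr (q - 1)"
    using error mean by (rule add_mono)
  finally show ?thesis by (simp only: add_divide_distrib)
qed

end

definition row_envelope :: "nat \<Rightarrow> (nat \<Rightarrow> real) \<Rightarrow> real" where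
  "row_envelope p x = (MAX k\<in>{..<p}. \<bar>x k\<bar>)"

lemma abs_le_row_envelope: "j < p \<Longrightarrow> \<bar>x j\<bar> \<le> row_envelope p x"
  unfolding row_envelope_def by (intro Max_ge) auto

lemma row_envelope_restrict: "row_envelope p (restrict x {..<p}) = row_envelope p x"
  unfolding row_envelope_def by (intro arg_cong[where f=Max] image_cong) auto

lemma borel_measurable_row_envelope_PiM:
  "row_envelope p \<in> borel_measurable (PiM {..<p} (\<lambda>_. borel))"
  unfolding row_envelope_def[abs_def]
  by (intro borel_measurable_Max borel_measurable_abs measurable_component_singleton) auto

lemma admissible_law_measurable_entry:
  "admissible_law n p M \<Longrightarrow> i < n \<Longrightarrow> j < p \<Longrightarrow> (\<lambda>\<omega>. \<omega> i j) \<in> borel_measurable M"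
  by (simp add: admissible_law_def)

lemma admissible_law_measurable_row_envelope:
  assumes "admissible_law n p M" "i < n"
  shows "(\<lambda>\<omega>. row_envelope p (\<omega> i)) \<in> borel_measurable M"
  unfolding row_envelope_def using assms
  by (intro borel_measurable_Max borel_measurable_abs admissible_law_measurable_entry) auto

definition truncated_entry :: "real \<Rightarrow> nat \<Rightarrow> nat \<Rightarrow> nat \<Rightarrow> (nat \<Rightarrow> nat \<Rightarrow> real) \<Rightarrow> real" where
  "truncated_entry \<tau> p i j = truncate_at \<tau> (\<lambda>\<omega>. row_envelope p (\<omega> i)) (\<lambda>\<omega>. \<omega> i j)"

lemma truncated_entry_restrict:
  "j < p \<Longrightarrow> truncated_entry \<tau> p i j \<omega> = truncate_at \<tau> (row_envelope p) (\<lambda>x. x j) (restrict (\<omega> i) {..<p})"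
  by (simp add: truncated_entry_def truncate_at_def row_envelope_restrict)

lemma indep_vars_centered_truncated_entries:
  fixes M :: "(nat \<Rightarrow> nat \<Rightarrow> real) measure"
  assumes adm: "admissible_law n p M" and j: "j < p"
  shows "prob_space.indep_vars M (\<lambda>_. borel)
    (\<lambda>i \<omega>. truncated_entry \<tau> p i j \<omega> - (\<integral>\<omega>. truncated_entry \<tau> p i j \<omega> \<partial>M)) {..<n}"
proof -
  interpret prob_space M using adm by (simp add: admissible_law_def)
  define h where "h i x = truncate_at \<tau> (row_envelope p) (\<lambda>x. x j) x - expectation (truncated_entry \<tau> p i j)"
    for i and x :: "nat \<Rightarrow> real"
  have [measurable]: "row_envelope p \<in> borel_measurable (PiM {..<p} (\<lambda>_. borel))"
    by (rule borel_measurable_row_envelope_PiM)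
  have [measurable]: "(\<lambda>x. x j) \<in> borel_measurable (PiM {..<p} (\<lambda>_. borel :: real measure))"
    using j by (intro measurable_component_singleton) auto
  have h: "h i \<in> borel_measurable (PiM {..<p} (\<lambda>_. borel))" for i
    unfolding h_def by measurable
  have rows: "indep_vars (\<lambda>_. PiM {..<p} (\<lambda>_. borel)) (\<lambda>i \<omega>. restrict (\<omega> i) {..<p}) {..<n}"
    using adm by (simp add: admissible_law_def)
  have "indep_vars (\<lambda>_. borel) (\<lambda>i \<omega>. h i (restrict (\<omega> i) {..<p})) {..<n}"
    by (rule indep_vars_compose2[OF rows h])
  moreover have "h i (restrict (\<omega> i) {..<p}) = truncated_entry \<tau> p i j \<omega> - expectation (truncated_entry \<tau> p i j)"
    for i \<omega> using j by (simp add: h_def truncated_entry_restrict)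
  ultimately show ?thesis by simp
qed

lemma expectation_Max_abs_sum_centered_truncated_entries_le:
  fixes M :: "(nat \<Rightarrow> nat \<Rightarrow> real) measure"
  assumes adm: "admissible_law n p M" and p: "1 \<le> p" and \<tau>: "0 \<le> \<tau>" and lam: "0 < lam"
    and sq_int: "\<And>i j. i < n \<Longrightarrow> j < p \<Longrightarrow> integrable M (\<lambda>\<omega>. (\<omega> i j)\<^sup>2)"
    and V: "\<And>j. j < p \<Longrightarrow> (\<Sum>i<n. \<integral>\<omega>. (\<omega> i j)\<^sup>2 \<partial>M) \<le> V"
  defines "Y \<equiv> \<lambda>i j \<omega>. truncated_entry \<tau> p i j \<omega> - (\<integral>\<omega>. truncated_entry \<tau> p i j \<omega> \<partial>M)"
  shows "integrable M (\<lambda>\<omega>. MAX j\<in>{..<p}. \<bar>\<Sum>i<n. Y i j \<omega>\<bar>)"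
    and "(\<integral>\<omega>. (MAX j\<in>{..<p}. \<bar>\<Sum>i<n. Y i j \<omega>\<bar>) \<partial>M)
      \<le> ln (2 * real p) / lam + lam * exp (2 * lam * \<tau>) * V / 2"
proof -
  interpret prob_space M using adm by (simp add: admissible_law_def)
  note entry = admissible_law_measurable_entry[OF adm]
  note env = admissible_law_measurable_row_envelope[OF adm]
  have indep: "indep_vars (\<lambda>_. borel) (\<lambda>i. Y i j) {..<n}" if "j \<in> {..<p}" for j
    unfolding Y_def using adm that by (intro indep_vars_centered_truncated_entries) auto
  have bounded: "\<bar>Y i j \<omega>\<bar> \<le> 2 * \<tau>" if "i \<in> {..<n}" "j \<in> {..<p}" for i j \<omega>
    unfolding Y_def truncated_entry_def using that \<tau> entry env
    by (intro abs_centered_truncate_at_le abs_le_row_envelope) auto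
  have centered: "expectation (Y i j) = 0" if "i \<in> {..<n}" "j \<in> {..<p}" for i j
  proof -
    have "integrable M (truncated_entry \<tau> p i j)"
      unfolding truncated_entry_def using that \<tau> entry env
      by (intro integrable_truncate_at abs_le_row_envelope) auto
    thus ?thesis by (simp add: Y_def prob_space)
  qed
  have variance: "(\<Sum>i\<in>{..<n}. expectation (\<lambda>\<omega>. (Y i j \<omega>)\<^sup>2)) \<le> V" if "j \<in> {..<p}" for j
  proof -
    have "(\<Sum>i<n. expectation (\<lambda>\<omega>. (Y i j \<omega>)\<^sup>2)) \<le> (\<Sum>i<n. expectation (\<lambda>\<omega>. (\<omega> i j)\<^sup>2))"
      unfolding Y_def truncated_entry_def using that sq_int entry env
      by (intro sum_mono expectation_sq_centered_truncate_at_le) auto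
    thus ?thesis using V that by (meson lessThan_iff order_trans)
  qed
  have index_sets: "finite {..<n}" "finite {..<p}" "{..<p} \<noteq> {}" using p by (auto simp: lessThan_empty_iff)
  note bulk = expectation_Max_abs_indep_sum_le[OF index_sets lam indep bounded centered variance]
  show "integrable M (\<lambda>\<omega>. MAX j\<in>{..<p}. \<bar>\<Sum>i<n. Y i j \<omega>\<bar>)"
    by (rule bulk(1))
  show "(\<integral>\<omega>. (MAX j\<in>{..<p}. \<bar>\<Sum>i<n. Y i j \<omega>\<bar>) \<partial>M)
      \<le> ln (2 * real p) / lam + lam * exp (2 * lam * \<tau>) * V / 2"
    using bulk(2) p by (simp add: mult_ac)
qed

lemma abs_sub_centered_truncated_entry_le:
  fixes M :: "(nat \<Rightarrow> nat \<Rightarrow> real) measure"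
  assumes adm: "admissible_law n p M" and i: "i < n" and j: "j < p" and "0 < \<tau>" "1 \<le> q"
    and "integrable M (\<lambda>\<omega>. row_envelope p (\<omega> i) powr q)"
  shows "\<bar>\<omega> i j - (truncated_entry \<tau> p i j \<omega> - (\<integral>\<omega>. truncated_entry \<tau> p i j \<omega> \<partial>M))\<bar>
    \<le> (row_envelope p (\<omega> i) powr q + (\<integral>\<omega>. row_envelope p (\<omega> i) powr q \<partial>M)) / \<tau> powr (q - 1)"
proof -
  interpret prob_space M using adm by (simp add: admissible_law_def)
  have "integrable M (\<lambda>\<omega>. \<omega> i j)" "expectation (\<lambda>\<omega>. \<omega> i j) = 0"
    using adm i j by (auto simp: admissible_law_def)
  thus ?thesis
    unfolding truncated_entry_def using assms
    by (intro abs_sub_centered_truncate_at_le admissible_law_measurable_row_envelope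
        admissible_law_measurable_entry abs_le_row_envelope)
qed

lemma max_mean_dev_le_truncation_bound:
  fixes M :: "(nat \<Rightarrow> nat \<Rightarrow> real) measure"
  assumes adm: "admissible_law n p M" and n: "1 \<le> n" and p: "1 \<le> p" and q: "1 \<le> q"
    and \<tau>: "0 < \<tau>" and lam: "0 < lam"
    and sq_int: "\<And>i j. i < n \<Longrightarrow> j < p \<Longrightarrow> integrable M (\<lambda>\<omega>. (\<omega> i j)\<^sup>2)"
    and V: "\<And>j. j < p \<Longrightarrow> (\<Sum>i<n. \<integral>\<omega>. (\<omega> i j)\<^sup>2 \<partial>M) \<le> n * V"
    and q_int: "\<And>i. i < n \<Longrightarrow> integrable M (\<lambda>\<omega>. row_envelope p (\<omega> i) powr q)"
    and D: "(\<Sum>i<n. \<integral>\<omega>. row_envelope p (\<omega> i) powr q \<partial>M) \<le> n * D"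
  shows "max_mean_dev n p M
    \<le> ennreal (ln (2 * real p) / n / lam + lam * exp (2 * lam * \<tau>) * V / 2 + 2 * D / \<tau> powr (q - 1))"
proof -
  interpret prob_space M using adm by (simp add: admissible_law_def)
  define Y where "Y i j \<omega> = truncated_entry \<tau> p i j \<omega> - expectation (truncated_entry \<tau> p i j)" for i j \<omega>
  define G where "G \<omega> = (MAX j\<in>{..<p}. \<bar>\<Sum>i<n. Y i j \<omega>\<bar>)" for \<omega>
  define T where "T \<omega> = (\<Sum>i<n. (row_envelope p (\<omega> i) powr q
    + expectation (\<lambda>\<omega>. row_envelope p (\<omega> i) powr q)) / \<tau> powr (q - 1))" for \<omega>
  note bulk = expectation_Max_abs_sum_centered_truncated_entries_le[OF adm p less_imp_le[OF \<tau>] lam sq_int V,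
    folded Y_def, folded G_def]
  have T_int: "integrable M T" unfolding T_def using q_int by auto
  have "expectation T = 2 * (\<Sum>i<n. expectation (\<lambda>\<omega>. row_envelope p (\<omega> i) powr q)) / \<tau> powr (q - 1)"
    unfolding T_def using q_int prob_space
    by (simp add: Bochner_Integration.integral_sum sum_divide_distrib sum_distrib_left)
  also have "\<dots> \<le> 2 * (n * D) / \<tau> powr (q - 1)"
    using D by (intro divide_right_mono) auto
  finally have T_le: "expectation T \<le> 2 * (n * D) / \<tau> powr (q - 1)" .
  have "\<bar>\<Sum>i<n. \<omega> i j\<bar> \<le> G \<omega> + T \<omega>" if j: "j < p" for j \<omega>
  proof -
    have "\<bar>\<Sum>i<n. \<omega> i j\<bar> = \<bar>(\<Sum>i<n. Y i j \<omega>) + (\<Sum>i<n. \<omega> i j - Y i j \<omega>)\<bar>"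
      by (simp add: sum_subtractf)
    also have "\<dots> \<le> \<bar>\<Sum>i<n. Y i j \<omega>\<bar> + \<bar>\<Sum>i<n. \<omega> i j - Y i j \<omega>\<bar>"
      by (rule abs_triangle_ineq)
    also have "\<dots> \<le> \<bar>\<Sum>i<n. Y i j \<omega>\<bar> + (\<Sum>i<n. \<bar>\<omega> i j - Y i j \<omega>\<bar>)"
      by (rule add_left_mono[OF sum_abs])
    also have "\<dots> \<le> G \<omega> + T \<omega>"
    proof (rule add_mono)
      show "\<bar>\<Sum>i<n. Y i j \<omega>\<bar> \<le> G \<omega>" unfolding G_def using j by (intro Max_ge) auto
      show "(\<Sum>i<n. \<bar>\<omega> i j - Y i j \<omega>\<bar>) \<le> T \<omega>"
        unfolding T_def Y_def using adm j \<tau> q q_int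
        by (intro sum_mono abs_sub_centered_truncated_entry_le) auto
    qed
    finally show ?thesis .
  qed
  hence pointwise: "(MAX j\<in>{..<p}. \<bar>(\<Sum>i<n. \<omega> i j) / real n\<bar>) \<le> (G \<omega> + T \<omega>) / n" for \<omega>
    using p n by (auto simp: Max_le_iff abs_divide divide_right_mono lessThan_empty_iff)
  have "0 \<le> G \<omega>" for \<omega> unfolding G_def using p by (auto simp: Max_ge_iff lessThan_empty_iff Suc_le_eq)
  moreover have "0 \<le> T \<omega>" for \<omega>
    unfolding T_def by (intro sum_nonneg divide_nonneg_nonneg add_nonneg_nonneg integral_nonneg) auto
  ultimately have integral_eq:
    "(\<integral>\<^sup>+\<omega>. ennreal ((G \<omega> + T \<omega>) / n) \<partial>M) = ennreal ((expectation G + expectation T) / n)"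
    using bulk(1) T_int by (subst nn_integral_eq_integral) auto
  have "max_mean_dev n p M \<le> (\<integral>\<^sup>+\<omega>. ennreal ((G \<omega> + T \<omega>) / n) \<partial>M)"
    unfolding max_mean_dev_def by (intro nn_integral_mono ennreal_leI pointwise)
  also have "\<dots> = ennreal ((expectation G + expectation T) / n)" by (rule integral_eq)
  also have "\<dots> \<le> ennreal ((ln (2 * real p) / lam + lam * exp (2 * lam * \<tau>) * (n * V) / 2
      + 2 * (n * D) / \<tau> powr (q - 1)) / n)"
    using bulk(2) T_le by (intro ennreal_leI divide_right_mono) auto
  also have "\<dots> = ennreal (ln (2 * real p) / n / lam + lam * exp (2 * lam * \<tau>) * V / 2 + 2 * D / \<tau> powr (q - 1))"
    using n by (simp add: add_divide_distrib mult_ac)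
  finally show ?thesis .
qed

lemma
  fixes f :: "'i \<Rightarrow> 'a \<Rightarrow> real"
  assumes I: "finite I" and meas: "\<And>i. i \<in> I \<Longrightarrow> f i \<in> borel_measurable M"
    and nonneg: "\<And>i x. i \<in> I \<Longrightarrow> 0 \<le> f i x"
    and finite: "(\<Sum>i\<in>I. \<integral>\<^sup>+x. ennreal (f i x) \<partial>M) < \<infinity>"
  shows integrable_of_sum_nn_integral_finite: "\<And>i. i \<in> I \<Longrightarrow> integrable M (f i)"
    and sum_nn_integral_eq_sum_integral: "(\<Sum>i\<in>I. \<integral>\<^sup>+x. ennreal (f i x) \<partial>M) = ennreal (\<Sum>i\<in>I. \<integral>x. f i x \<partial>M)"
proof -
  show int: "integrable M (f i)" if "i \<in> I" for i
  proof (rule integrableI_nonneg)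
    have "(\<integral>\<^sup>+x. ennreal (f i x) \<partial>M) \<le> (\<Sum>i\<in>I. \<integral>\<^sup>+x. ennreal (f i x) \<partial>M)"
      using I that by (intro member_le_sum) auto
    thus "(\<integral>\<^sup>+x. ennreal (f i x) \<partial>M) < \<infinity>" using finite by (rule le_less_trans)
  qed (use meas nonneg that in auto)
  have "(\<Sum>i\<in>I. \<integral>\<^sup>+x. ennreal (f i x) \<partial>M) = (\<Sum>i\<in>I. ennreal (\<integral>x. f i x \<partial>M))"
    using int nonneg by (intro sum.cong nn_integral_eq_integral) auto
  also have "\<dots> = ennreal (\<Sum>i\<in>I. \<integral>x. f i x \<partial>M)"
    using nonneg by (intro sum_ennreal integral_nonneg) auto
  finally show "(\<Sum>i\<in>I. \<integral>\<^sup>+x. ennreal (f i x) \<partial>M) = ennreal (\<Sum>i\<in>I. \<integral>x. f i x \<partial>M)" .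
qed

lemma ennreal_divide_of_nat_le_iff:
  assumes "1 \<le> n" "0 \<le> c"
  shows "x / of_nat n \<le> ennreal c \<longleftrightarrow> x \<le> ennreal (n * c)"
proof (cases x)
  case (real a)
  have "ennreal a / of_nat n = ennreal (a / n)"
    using assms real by (simp add: ennreal_of_nat_eq_real_of_nat divide_ennreal)
  thus ?thesis using assms real by (simp add: ennreal_le_iff pos_divide_le_eq mult.commute)
qed (simp add: ennreal_top_divide top_unique)

lemma
  fixes M :: "(nat \<Rightarrow> nat \<Rightarrow> real) measure"
  assumes adm: "admissible_law n p M" and n: "1 \<le> n" and V: "0 \<le> V" "law_V n p M \<le> ennreal V"
    and j: "j < p"
  shows integrable_sq_entry_of_law_V_le: "\<And>i. i < n \<Longrightarrow> integrable M (\<lambda>\<omega>. (\<omega> i j)\<^sup>2)"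
    and sum_second_moments_le_of_law_V_le: "(\<Sum>i<n. \<integral>\<omega>. (\<omega> i j)\<^sup>2 \<partial>M) \<le> n * V"
proof -
  have meas: "(\<lambda>\<omega>. (\<omega> i j)\<^sup>2) \<in> borel_measurable M" if "i \<in> {..<n}" for i
  proof -
    have "(\<lambda>\<omega>. \<omega> i j) \<in> borel_measurable M" using adm that j by (simp add: admissible_law_measurable_entry)
    thus ?thesis by measurable
  qed
  have avg: "(\<Sum>i<n. \<integral>\<^sup>+\<omega>. ennreal ((\<omega> i j)\<^sup>2) \<partial>M) / of_nat n \<le> law_V n p M"
    unfolding law_V_def using j by (intro Max_ge) auto
  have le: "(\<Sum>i<n. \<integral>\<^sup>+\<omega>. ennreal ((\<omega> i j)\<^sup>2) \<partial>M) \<le> ennreal (n * V)"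
    using ennreal_divide_of_nat_le_iff[OF n V(1)] order_trans[OF avg V(2)] by (rule iffD1)
  hence fin: "(\<Sum>i<n. \<integral>\<^sup>+\<omega>. ennreal ((\<omega> i j)\<^sup>2) \<partial>M) < \<infinity>"
    by (rule le_less_trans) simp
  show "integrable M (\<lambda>\<omega>. (\<omega> i j)\<^sup>2)" if "i < n" for i
    using meas fin that by (intro integrable_of_sum_nn_integral_finite[of "{..<n}"]) auto
  have sum_eq: "(\<Sum>i<n. \<integral>\<^sup>+\<omega>. ennreal ((\<omega> i j)\<^sup>2) \<partial>M) = ennreal (\<Sum>i<n. \<integral>\<omega>. (\<omega> i j)\<^sup>2 \<partial>M)"
    using meas fin by (intro sum_nn_integral_eq_sum_integral) auto
  show "(\<Sum>i<n. \<integral>\<omega>. (\<omega> i j)\<^sup>2 \<partial>M) \<le> n * V"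
    using le unfolding sum_eq by (rule ennreal_le_iff[THEN iffD1, rotated]) (simp add: V)
qed

lemma
  fixes M :: "(nat \<Rightarrow> nat \<Rightarrow> real) measure"
  assumes adm: "admissible_law n p M" and n: "1 \<le> n" and q: "0 < q" and D: "Dq_le q n p M B"
  shows integrable_row_envelope_powr_of_Dq_le:
      "\<And>i. i < n \<Longrightarrow> integrable M (\<lambda>\<omega>. row_envelope p (\<omega> i) powr q)"
    and sum_row_envelope_moments_le_of_Dq_le:
      "(\<Sum>i<n. \<integral>\<omega>. row_envelope p (\<omega> i) powr q \<partial>M) \<le> n * B powr q"
proof -
  define d where "d = enn2real (law_Dq_pow q n p M)"
  have d0: "0 \<le> d" by (simp add: d_def)
  have "law_Dq_pow q n p M \<le> ennreal d"
    using D by (auto simp: Dq_le_def d_def ennreal_enn2real_if)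
  hence le: "(\<Sum>i<n. \<integral>\<^sup>+\<omega>. ennreal (row_envelope p (\<omega> i) powr q) \<partial>M) \<le> ennreal (n * d)"
    using ennreal_divide_of_nat_le_iff[OF n d0] by (simp add: law_Dq_pow_def row_envelope_def)
  hence "(\<Sum>i<n. \<integral>\<^sup>+\<omega>. ennreal (row_envelope p (\<omega> i) powr q) \<partial>M) < \<infinity>"
    by (rule le_less_trans) simp
  moreover have "(\<lambda>\<omega>. row_envelope p (\<omega> i) powr q) \<in> borel_measurable M" if "i \<in> {..<n}" for i
  proof -
    have "(\<lambda>\<omega>. row_envelope p (\<omega> i)) \<in> borel_measurable M"
      using adm that by (intro admissible_law_measurable_row_envelope) auto
    thus ?thesis by measurable
  qed
  ultimately have fin: "(\<Sum>i<n. \<integral>\<^sup>+\<omega>. ennreal (row_envelope p (\<omega> i) powr q) \<partial>M) < \<infinity>"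
    and meas: "\<And>i. i \<in> {..<n} \<Longrightarrow> (\<lambda>\<omega>. row_envelope p (\<omega> i) powr q) \<in> borel_measurable M"
    by blast+
  show "integrable M (\<lambda>\<omega>. row_envelope p (\<omega> i) powr q)" if "i < n" for i
    using meas fin that by (intro integrable_of_sum_nn_integral_finite[of "{..<n}"]) auto
  have sum_eq: "(\<Sum>i<n. \<integral>\<^sup>+\<omega>. ennreal (row_envelope p (\<omega> i) powr q) \<partial>M)
      = ennreal (\<Sum>i<n. \<integral>\<omega>. row_envelope p (\<omega> i) powr q \<partial>M)"
    using meas fin by (intro sum_nn_integral_eq_sum_integral) auto
  have "d = (d powr (1 / q)) powr q" using q d0 by (simp add: powr_powr)
  also have "\<dots> \<le> B powr q"
    using D q by (intro powr_mono2) (auto simp: Dq_le_def d_def)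
  finally have "d \<le> B powr q" .
  moreover have "(\<Sum>i<n. \<integral>\<omega>. row_envelope p (\<omega> i) powr q \<partial>M) \<le> n * d"
    using le unfolding sum_eq by (rule ennreal_le_iff[THEN iffD1, rotated]) (simp add: d0)
  ultimately show "(\<Sum>i<n. \<integral>\<omega>. row_envelope p (\<omega> i) powr q \<partial>M) \<le> n * B powr q"
    by (meson mult_left_mono of_nat_0_le_iff order_trans)
qed

lemma max_mean_dev_le_of_constraints:
  fixes M :: "(nat \<Rightarrow> nat \<Rightarrow> real) measure"
  assumes adm: "admissible_law n p M" and n: "1 \<le> n" and p: "1 \<le> p" and q: "1 \<le> q"
    and V: "law_V n p M \<le> ennreal (\<sigma>\<^sup>2)" and D: "Dq_le q n p M B" and "0 < \<tau>" "0 < lam"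
  shows "max_mean_dev n p M
    \<le> ennreal (ln (2 * real p) / n / lam + lam * exp (2 * lam * \<tau>) * \<sigma>\<^sup>2 / 2 + 2 * B powr q / \<tau> powr (q - 1))"
proof (rule max_mean_dev_le_truncation_bound[OF adm n p q \<open>0 < \<tau>\<close> \<open>0 < lam\<close>])
  show "integrable M (\<lambda>\<omega>. (\<omega> i j)\<^sup>2)" if "i < n" "j < p" for i j
    using integrable_sq_entry_of_law_V_le[OF adm n _ V] that by simp
  show "(\<Sum>i<n. \<integral>\<omega>. (\<omega> i j)\<^sup>2 \<partial>M) \<le> n * \<sigma>\<^sup>2" if "j < p" for j
    using sum_second_moments_le_of_law_V_le[OF adm n _ V] that by simp
  show "integrable M (\<lambda>\<omega>. row_envelope p (\<omega> i) powr q)" if "i < n" for i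
    using integrable_row_envelope_powr_of_Dq_le[OF adm n _ D] q that by simp
  show "(\<Sum>i<n. \<integral>\<omega>. row_envelope p (\<omega> i) powr q \<partial>M) \<le> n * B powr q"
    using sum_row_envelope_moments_le_of_Dq_le[OF adm n _ D] q by simp
qed

text \<open>The choice \<open>lam * \<tau> = m / 4\<close> turns \<open>exp (2 * lam * \<tau>)\<close> into \<open>exp (m / 2)\<close>, which the
  hypothesis on \<open>exp (m - 1)\<close> absorbs; \<open>\<tau>\<close> is chosen so that the first and last terms are exactly
  4 and 2 times \<open>B * L powr (1 - 1 / q) * m powr (1 / q - 1)\<close>.\<close>

lemma truncation_parameters_bound:
  fixes q L B \<sigma> m :: real
  assumes q: "2 < q" and L: "0 < L" and B: "0 < B" and \<sigma>: "0 < \<sigma>" and m: "1 \<le> m"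
    and R: "exp (m - 1) \<le> B\<^sup>2 / \<sigma>\<^sup>2 * L powr (1 - 2 / q)"
  defines "\<tau> \<equiv> B * L powr (- 1 / q) * m powr (1 / q)"
  defines "lam \<equiv> m / (4 * \<tau>)"
  shows "L / lam + lam * exp (2 * lam * \<tau>) * \<sigma>\<^sup>2 / 2 + 2 * B powr q / \<tau> powr (q - 1)
     \<le> 12 * B * L powr (1 - 1 / q) * m powr (1 / q - 1)"
proof -
  define U where "U = B * L powr (1 - 1 / q) * m powr (1 / q - 1)"
  define a where "a = L powr (1 / q)"
  define b where "b = m powr (1 / q)"
  have m0: "0 < m" using m by simp
  have a0: "0 < a" and b0: "0 < b" using L m0 by (auto simp: a_def b_def)
  have \<tau>: "\<tau> = B * b / a" using L by (simp add: \<tau>_def a_def b_def powr_minus_divide)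
  have U: "U = B * (L / a) * (b / m)"
    using L m0 by (simp add: U_def a_def b_def powr_diff)
  have \<tau>0: "0 < \<tau>" using B a0 b0 by (simp add: \<tau>)
  have \<tau>L: "\<tau> * L / m = U" by (simp add: \<tau> U)
  hence log_term: "L / lam = 4 * U" using \<tau>0 m0 by (simp add: lam_def field_simps)
  have "\<tau> powr q = B powr q * m / L"
    using B L m0 q by (simp add: \<tau> a_def b_def powr_mult powr_divide powr_powr)
  hence "B powr q / \<tau> powr (q - 1) = \<tau> * L / m"
    using B L m0 \<tau>0 by (simp add: powr_diff field_simps)
  hence "B powr q / \<tau> powr (q - 1) = U" using \<tau>L by simp
  hence tail_term: "2 * B powr q / \<tau> powr (q - 1) = 2 * U" by simp
  have "a\<^sup>2 = L powr (2 / q)" "b\<^sup>2 = m powr (2 / q)"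
    by (simp_all add: a_def b_def power2_eq_square flip: powr_add)
  hence "\<tau> * U * m = B\<^sup>2 / \<sigma>\<^sup>2 * L powr (1 - 2 / q) * \<sigma>\<^sup>2 * m powr (2 / q)"
    using L m0 a0 \<sigma> by (simp add: \<tau> U power2_eq_square powr_diff field_simps)
  moreover have "exp (m - 1) * \<sigma>\<^sup>2 \<le> B\<^sup>2 / \<sigma>\<^sup>2 * L powr (1 - 2 / q) * \<sigma>\<^sup>2 * m powr (2 / q)"
  proof -
    have "exp (m - 1) * \<sigma>\<^sup>2 \<le> B\<^sup>2 / \<sigma>\<^sup>2 * L powr (1 - 2 / q) * \<sigma>\<^sup>2"
      using R by (rule mult_right_mono) simp
    also have "\<dots> \<le> \<dots> * m powr (2 / q)"
      using mult_left_mono[OF ge_one_powr_ge_zero[of m "2 / q"]] m q by simp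
    finally show ?thesis .
  qed
  ultimately have "exp (m - 1) * \<sigma>\<^sup>2 \<le> \<tau> * U * m" by linarith
  moreover have "m\<^sup>2 * exp (m / 2) * \<sigma>\<^sup>2 \<le> 48 * exp (m - 1) * \<sigma>\<^sup>2"
    using sq_mul_exp_half_le[of m] m by (intro mult_right_mono) auto
  ultimately have m2_le: "m\<^sup>2 * exp (m / 2) * \<sigma>\<^sup>2 \<le> 48 * (\<tau> * U * m)" by linarith
  have "lam * exp (2 * lam * \<tau>) * \<sigma>\<^sup>2 / 2 = m\<^sup>2 * exp (m / 2) * \<sigma>\<^sup>2 / (8 * \<tau> * m)"
    using \<tau>0 m0 by (simp add: lam_def power2_eq_square field_simps)
  also have "\<dots> \<le> 48 * (\<tau> * U * m) / (8 * \<tau> * m)"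
    using m2_le \<tau>0 m0 by (intro divide_right_mono) auto
  also have "\<dots> = 6 * U" using \<tau>0 m0 by simp
  finally have variance_term: "lam * exp (2 * lam * \<tau>) * \<sigma>\<^sup>2 / 2 \<le> 6 * U" .
  show ?thesis using log_term tail_term variance_term by (simp add: U_def)
qed

lemma exists_truncation_parameters:
  fixes q L B \<sigma> :: real
  assumes q: "2 < q" and L: "0 < L" and B: "0 < B" and \<sigma>: "0 < \<sigma>"
    and large: "exp 1 < (B\<^sup>2 / \<sigma>\<^sup>2) powr (q / (q - 2)) * L"
  obtains \<tau> lam where "0 < \<tau>" "0 < lam"
    "L / lam + lam * exp (2 * lam * \<tau>) * \<sigma>\<^sup>2 / 2 + 2 * B powr q / \<tau> powr (q - 1)
      \<le> 12 * B * L powr (1 - 1 / q) * (ln (B\<^sup>2 / \<sigma>\<^sup>2 * L powr (1 - 2 / q))) powr (1 / q - 1)"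
proof -
  define R where "R = B\<^sup>2 / \<sigma>\<^sup>2 * L powr (1 - 2 / q)"
  define m where "m = max (ln R) 1"
  define \<tau> where "\<tau> = B * L powr (- 1 / q) * m powr (1 / q)"
  have "1 < R" unfolding R_def using B \<sigma> L q large by (intro one_less_mul_powr_of_powr_mul_gt_exp1) auto
  hence lnR: "0 < ln R" by simp
  have "exp (m - 1) \<le> exp (ln R)" using lnR by (simp add: m_def)
  hence "exp (m - 1) \<le> R" using \<open>1 < R\<close> by simp
  hence "L / (m / (4 * \<tau>)) + m / (4 * \<tau>) * exp (2 * (m / (4 * \<tau>)) * \<tau>) * \<sigma>\<^sup>2 / 2
      + 2 * B powr q / \<tau> powr (q - 1) \<le> 12 * B * L powr (1 - 1 / q) * m powr (1 / q - 1)"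
    unfolding \<tau>_def R_def using q L B \<sigma> by (intro truncation_parameters_bound) (auto simp: m_def)
  also have "\<dots> \<le> 12 * B * L powr (1 - 1 / q) * (ln R) powr (1 / q - 1)"
    using lnR q B L by (intro mult_left_mono powr_mono2') (auto simp: m_def field_simps)
  finally show ?thesis unfolding R_def
    using that[of \<tau> "m / (4 * \<tau>)"] B L by (simp add: \<tau>_def m_def)
qed

theorem proposition4p4:
  shows "\<exists>C>0. \<forall>(q::real) (n::nat) (p::nat) (\<sigma>::real) (B::real).
     q > 2 \<longrightarrow> n \<ge> 1 \<longrightarrow> p \<ge> 1 \<longrightarrow> \<sigma> > 0 \<longrightarrow> B > 0 \<longrightarrow>
     (B\<^sup>2 / \<sigma>\<^sup>2) powr (q / (q - 2)) * (ln (2 * real p) / real n) > exp 1 \<longrightarrow>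
     Eq q n p \<sigma> B \<le> ennreal (C * B * (ln (2 * real p) / real n) powr (1 - 1 / q)
        * (ln ((B\<^sup>2 / \<sigma>\<^sup>2) * (ln (2 * real p) / real n) powr (1 - 2 / q))) powr (1 / q - 1))"
proof (intro exI[of _ 12] conjI allI impI)
  fix q :: real and n p :: nat and \<sigma> B :: real
  assume q: "q > 2" and n: "n \<ge> 1" and p: "p \<ge> 1" and \<sigma>: "\<sigma> > 0" and B: "B > 0"
    and large: "(B\<^sup>2 / \<sigma>\<^sup>2) powr (q / (q - 2)) * (ln (2 * real p) / real n) > exp 1"
  have L: "0 < ln (2 * real p) / real n" using n p by simp
  obtain \<tau> lam where "0 < \<tau>" "0 < lam" and bound:
    "ln (2 * real p) / n / lam + lam * exp (2 * lam * \<tau>) * \<sigma>\<^sup>2 / 2 + 2 * B powr q / \<tau> powr (q - 1)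
      \<le> 12 * B * (ln (2 * real p) / real n) powr (1 - 1 / q)
        * (ln ((B\<^sup>2 / \<sigma>\<^sup>2) * (ln (2 * real p) / real n) powr (1 - 2 / q))) powr (1 / q - 1)"
    using exists_truncation_parameters[OF q L B \<sigma> large] by blast
  show "Eq q n p \<sigma> B \<le> ennreal (12 * B * (ln (2 * real p) / real n) powr (1 - 1 / q)
        * (ln ((B\<^sup>2 / \<sigma>\<^sup>2) * (ln (2 * real p) / real n) powr (1 - 2 / q))) powr (1 / q - 1))"
    unfolding Eq_def
  proof (rule SUP_least, clarify)
    fix M assume "admissible_law n p M" "law_V n p M \<le> ennreal (\<sigma>\<^sup>2)" "Dq_le q n p M B"
    with n p q \<open>0 < \<tau>\<close> \<open>0 < lam\<close> have "max_mean_dev n p M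
      \<le> ennreal (ln (2 * real p) / n / lam + lam * exp (2 * lam * \<tau>) * \<sigma>\<^sup>2 / 2 + 2 * B powr q / \<tau> powr (q - 1))"
      by (intro max_mean_dev_le_of_constraints) auto
    also have "\<dots> \<le> ennreal (12 * B * (ln (2 * real p) / real n) powr (1 - 1 / q)
        * (ln ((B\<^sup>2 / \<sigma>\<^sup>2) * (ln (2 * real p) / real n) powr (1 - 2 / q))) powr (1 / q - 1))"
      using bound by (rule ennreal_leI)
    finally show "max_mean_dev n p M \<le> \<dots>" .
  qed
qed simp

end
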